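(* For any $p,q>0$ with $\tfrac1p+\tfrac1q=1$, the function \[ f(s)=\frac{s\log(ps)+(1-s)\log(q(1-s))}{(s-\tfrac1p)^2},\qquad s\in(0,1), \] is convex. *)

theory Defs
  imports "HOL-Analysis.Analysis"
begin

text \<open>The function f of the paper, extended by continuity at the removable
singularity s = 1/p (where numerator and denominator both vanish); the limit
there is (1/s + 1/(1-s))/2 at s = 1/p, i.e. (p+q)/2.\<close>
definition fC1 :: "real \<Rightarrow> real \<Rightarrow> real \<Rightarrow> real" where
  "fC1 p q s = (if s = 1/p then (p + q) / 2
     else (s * ln (p * s) + (1 - s) * ln (q * (1 - s))) / (s - 1/p)^2)"

end

theory Submission
  imports Defs
begin

text \<open>With \<open>a = 1/p\<close> and \<open>1 - a = 1/q\<close>, the numerator of \<open>f\<close> is the relative entropy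
  \<open>\<phi>(s) = s ln (s/a) + (1-s) ln ((1-s)/(1-a))\<close>, which vanishes to second order at \<open>a\<close> and has
  \<open>\<phi>''(t) = 1/t + 1/(1-t)\<close>. Taylor's formula with integral remainder gives
  \<open>f(s) = \<integral>\<^sub>0\<^sup>1 (1-u) \<phi>''((1-u) a + u s) du\<close>, an average of convex functions of \<open>s\<close>.\<close>

lemma convex_on_compose_affine:
  fixes g :: "'a::real_vector \<Rightarrow> real"
  assumes g: "convex_on S g" and T: "convex T" and maps: "\<And>x. x \<in> T \<Longrightarrow> c + m *\<^sub>R x \<in> S"
  shows "convex_on T (\<lambda>x. g (c + m *\<^sub>R x))"
proof (rule convex_onI[OF _ T])
  fix t :: real and x y assume t: "0 < t" "t < 1" and x: "x \<in> T" and y: "y \<in> T"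
  have "c + m *\<^sub>R ((1 - t) *\<^sub>R x + t *\<^sub>R y) = (1 - t) *\<^sub>R (c + m *\<^sub>R x) + t *\<^sub>R (c + m *\<^sub>R y)"
    by (simp add: algebra_simps)
  then show "g (c + m *\<^sub>R ((1 - t) *\<^sub>R x + t *\<^sub>R y)) \<le> (1 - t) * g (c + m *\<^sub>R x) + t * g (c + m *\<^sub>R y)"
    using convex_onD[OF g, of t] t maps[OF x] maps[OF y] by simp
qed

lemma convex_on_has_integral:
  fixes F :: "'b::euclidean_space \<Rightarrow> 'a::real_vector \<Rightarrow> real"
  assumes S: "convex S"
    and integral: "\<And>x. x \<in> S \<Longrightarrow> ((\<lambda>u. F u x) has_integral f x) D"
    and convex: "\<And>u. u \<in> D \<Longrightarrow> convex_on S (F u)"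
  shows "convex_on S f"
proof (rule convex_onI[OF _ S])
  fix t :: real and x y assume t: "0 < t" "t < 1" and x: "x \<in> S" and y: "y \<in> S"
  have z: "(1 - t) *\<^sub>R x + t *\<^sub>R y \<in> S"
    using convexD_alt[OF S x y] t by simp
  have "((\<lambda>u. (1 - t) * F u x + t * F u y) has_integral (1 - t) * f x + t * f y) D"
    by (intro has_integral_add has_integral_mult_right integral x y)
  then show "f ((1 - t) *\<^sub>R x + t *\<^sub>R y) \<le> (1 - t) * f x + t * f y"
    using convex_onD[OF convex] t x y by (intro has_integral_le[OF integral[OF z]]) auto
qed

lemma convex_on_inverse_add_inverse_one_minus:
  "convex_on {0<..<1} (\<lambda>t::real. 1/t + 1/(1 - t))"
proof -
  have "convex_on {0<..<1} (\<lambda>t::real. inverse t)"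
    by (rule convex_on_inverse) auto
  moreover have "convex_on {0<..<1} (\<lambda>t::real. inverse (1 + (-1) *\<^sub>R t))"
    by (rule convex_on_compose_affine[OF convex_on_inverse[of "{0<..}"]]) auto
  ultimately show ?thesis
    by (simp add: convex_on_add divide_inverse)
qed

lemma conjugate_exponents_inverse:
  fixes p q :: real
  assumes "p > 0" and "q > 0" and "1/p + 1/q = 1"
  shows "1/p \<in> {0<..<1}" and "1 - 1/p = 1/q"
proof -
  have "0 < 1/p" and "0 < 1/q"
    using assms(1,2) by simp_all
  then show "1/p \<in> {0<..<1}" and "1 - 1/p = 1/q"
    using assms(3) unfolding greaterThanLessThan_iff by linarith+
qed

lemma fC1_has_integral:
  fixes p q s :: real
  assumes p: "p > 0" and q: "q > 0" and pq: "1/p + 1/q = 1" and s: "s \<in> {0<..<1}"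
  shows "((\<lambda>u. (1 - u) * (1/((1 - u)/p + u * s) + 1/(1 - ((1 - u)/p + u * s))))
           has_integral fC1 p q s) {0..1}"
proof -
  define a where "a = 1/p"
  have a: "a \<in> {0<..<1}" and one_minus_a: "1 - a = 1/q"
    using conjugate_exponents_inverse[OF p q pq] by (simp_all add: a_def)
  show ?thesis
  proof (cases "s = a")
    case True
    have "((\<lambda>u::real. 1 - u) has_integral (\<lambda>u. u - u^2/2) 1 - (\<lambda>u. u - u^2/2) 0) {0..1}"
      by (rule fundamental_theorem_of_calculus)
        (auto simp flip: has_real_derivative_iff_has_vector_derivative intro!: derivative_eq_intros)
    from has_integral_mult_left[OF this, of "p + q"]
    have "((\<lambda>u. (1 - u) * (p + q)) has_integral (p + q) / 2) {0..1}"
      by simp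
    moreover have "(1 - u)/p + u * s = a" for u
      using True by (simp add: a_def add_divide_distrib[symmetric])
    moreover have "1/a + 1/(1 - a) = p + q"
      using one_minus_a by (simp add: a_def)
    ultimately show ?thesis
      using True by (simp add: fC1_def a_def)
  next
    case False
    define h where "h = s - a"
    have "h \<noteq> 0"
      using False by (simp add: h_def)
    define num where "num u = s * ln (p * (a + u * h)) + (1 - s) * ln (q * (1 - (a + u * h)))" for u
    define G where "G u = num u / h^2" for u
    have "((\<lambda>u. (1 - u) * (1/(a + u * h) + 1/(1 - (a + u * h)))) has_integral G 1 - G 0) {0..1}"
    proof (rule fundamental_theorem_of_calculus)
      fix u :: real assume u: "u \<in> {0..1}"
      define t where "t = a + u * h"
      have t: "0 < t" "t < 1"
        using convexD_alt[OF _ a s, of u] u by (simp_all add: t_def h_def algebra_simps)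
      have "(num has_real_derivative s * h / t - (1 - s) * h / (1 - t)) (at u)"
        unfolding num_def using p q t
        by (auto intro!: derivative_eq_intros simp: t_def mult.commute)
      then have dG: "(G has_real_derivative (s * h / t - (1 - s) * h / (1 - t)) / h^2) (at u)"
        unfolding G_def by (rule DERIV_cdivide)
      have "s - t = h * (1 - u)"
        by (simp add: t_def h_def algebra_simps)
      moreover have "s * h / t - (1 - s) * h / (1 - t) = h * (s - t) / (t * (1 - t))"
        using t by (simp add: field_simps)
      ultimately have "(s * h / t - (1 - s) * h / (1 - t)) / h^2 = (1 - u) / (t * (1 - t))"
        using \<open>h \<noteq> 0\<close> by (simp add: power2_eq_square)
      also have "\<dots> = (1 - u) * (1/t + 1/(1 - t))"
        using t by (simp add: field_simps)
      finally have "(G has_real_derivative (1 - u) * (1/t + 1/(1 - t))) (at u)"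
        using dG by simp
      then show "(G has_vector_derivative (1 - u) * (1/(a + u * h) + 1/(1 - (a + u * h))))
          (at u within {0..1})"
        unfolding t_def has_real_derivative_iff_has_vector_derivative
        by (rule has_vector_derivative_at_within)
    qed simp
    moreover have "G 1 - G 0 = fC1 p q s"
      using False p one_minus_a by (simp add: G_def num_def fC1_def h_def a_def)
    moreover have "a + u * h = (1 - u)/p + u * s" for u
      using p by (simp add: a_def h_def field_simps)
    ultimately show ?thesis
      by simp
  qed
qed

theorem lemmaC1:
  fixes p q :: real
  assumes "p > 0" and "q > 0" and "1/p + 1/q = 1"
  shows "convex_on {0<..<1} (fC1 p q)"
proof (rule convex_on_has_integral[OF _ fC1_has_integral[OF assms]])
  fix u :: real assume u: "u \<in> {0..1}"
  have "(1 - u)/p + u * s \<in> {0<..<1}" if "s \<in> {0<..<1}" for s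
    using convexD_alt[OF _ conjugate_exponents_inverse(1)[OF assms] that, of u] u by (simp add: divide_inverse)
  then have "convex_on {0<..<1} (\<lambda>s. 1/((1 - u)/p + u * s) + 1/(1 - ((1 - u)/p + u * s)))"
    by (intro convex_on_compose_affine[OF convex_on_inverse_add_inverse_one_minus, simplified]) auto
  with u show "convex_on {0<..<1} (\<lambda>s. (1 - u) * (1/((1 - u)/p + u * s) + 1/(1 - ((1 - u)/p + u * s))))"
    by (intro convex_on_cmul) auto
qed simp

end
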